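(* Let $D=(E,\mathcal{F})$ be a binary delta-matroid. If every element of $E$ has primal type $u$ in $D$, then $D$ is even, i.e. $|X\Delta Y|$ is even for all $X,Y\in\mathcal{F}$.
   Context: A delta-matroid is a pair $D=(E,\mathcal{F})$ with $E$ finite, $\mathcal{F}$ a nonempty collection of subsets of $E$, such that for all $X,Y\in\mathcal{F}$ and $u\in X\Delta Y$ there is $v\in X\Delta Y$ (possibly $v=u$) with $X\Delta\{u,v\}\in\mathcal{F}$. The twist by $A\subseteq E$ is $D*A=(E,\{A\Delta X:X\in\mathcal{F}\})$. For a symmetric matrix $C$ over $\mathrm{GF}(2)$ indexed by $E$, $D(C)=(E,\{A\subseteq E: C[A]\text{ non-singular}\})$, with $C[A]$ the principal submatrix on $A$ and $C[\emptyset]$ non-singular by convention; a delta-matroid is binary if some twist of it is isomorphic to some $D(C)$. Let $\mathcal{F}_{\min}(D)$ be the set of minimum-cardinality feasible sets. An element $e$ is a ribbon loop if it lies in no member of $\mathcal{F}_{\min}(D)$; a ribbon loop $e$ is orientable if it is not a ribbon loop in $D*e$. An element has primal type $u$ if it is an orientable ribbon loop. *)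

theory Defs
  imports Main "HOL-Library.Z2" "HOL-Combinatorics.Permutations"
begin

definition symd :: "'a set \<Rightarrow> 'a set \<Rightarrow> 'a set" where
  "symd X Y = (X - Y) \<union> (Y - X)"

definition delta_matroid :: "'a set \<Rightarrow> 'a set set \<Rightarrow> bool" where
  "delta_matroid E F \<longleftrightarrow> finite E \<and> F \<noteq> {} \<and> (\<forall>X\<in>F. X \<subseteq> E) \<and>
     (\<forall>X\<in>F. \<forall>Y\<in>F. \<forall>u\<in>symd X Y. \<exists>v\<in>symd X Y. symd X {u, v} \<in> F)"

definition twist :: "'a set set \<Rightarrow> 'a set \<Rightarrow> 'a set set" where
  "twist F A = (\<lambda>X. symd A X) ` F"

definition pdet :: "('a \<Rightarrow> 'a \<Rightarrow> bit) \<Rightarrow> 'a set \<Rightarrow> bit" where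
  "pdet C A = (\<Sum>p | p permutes A. of_int (sign p) * (\<Prod>i\<in>A. C i (p i)))"

text \<open>Feasible sets of D(C), for C symmetric indexed by E (det of empty matrix is 1).\<close>
definition DC :: "'a set \<Rightarrow> ('a \<Rightarrow> 'a \<Rightarrow> bit) \<Rightarrow> 'a set set" where
  "DC E C = {A. A \<subseteq> E \<and> pdet C A \<noteq> 0}"

definition binary_dm :: "'a set \<Rightarrow> 'a set set \<Rightarrow> bool" where
  "binary_dm E F \<longleftrightarrow> (\<exists>A C. A \<subseteq> E \<and> (\<forall>i\<in>E. \<forall>j\<in>E. C i j = C j i) \<and>
       (\<exists>f. bij_betw f E E \<and> (\<lambda>X. f ` X) ` twist F A = DC E C))"

definition F_min :: "'a set set \<Rightarrow> 'a set set" where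
  "F_min F = {X \<in> F. \<forall>Y\<in>F. card X \<le> card Y}"

definition ribbon_loop :: "'a set \<Rightarrow> 'a set set \<Rightarrow> 'a \<Rightarrow> bool" where
  "ribbon_loop E F e \<longleftrightarrow> e \<in> E \<and> (\<forall>X\<in>F_min F. e \<notin> X)"

definition orientable_ribbon_loop :: "'a set \<Rightarrow> 'a set set \<Rightarrow> 'a \<Rightarrow> bool" where
  "orientable_ribbon_loop E F e \<longleftrightarrow> ribbon_loop E F e \<and> \<not> ribbon_loop E (twist F {e}) e"

definition primal_type_u :: "'a set \<Rightarrow> 'a set set \<Rightarrow> 'a \<Rightarrow> bool" where
  "primal_type_u E F e \<longleftrightarrow> orientable_ribbon_loop E F e"

definition even_dm :: "'a set set \<Rightarrow> bool" where
  "even_dm F \<longleftrightarrow> (\<forall>X\<in>F. \<forall>Y\<in>F. even (card (symd X Y)))"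

end

theory Submission
  imports Defs "HOL-Library.Disjoint_Sets"
begin

text \<open>
  Since every element is a ribbon loop, the minimal feasible sets are empty, so \<open>{} \<in> F\<close>;
  since every ribbon loop is orientable, no singleton is feasible (otherwise \<open>{}\<close> would be
  feasible in \<open>D * e\<close> and \<open>e\<close> would remain a ribbon loop there). Transported through the
  twist and relabelling to \<open>D(C)\<close>, this gives a set \<open>B\<close> with \<open>C[B]\<close> non-singular but every
  \<open>C[B \<Delta> {s}]\<close> singular.

  For symmetric \<open>C\<close> over GF(2) a permutation and its inverse contribute equally to the
  Leibniz sum, so only involutions survive and \<open>det C[Z] = \<Sum>y\<in>Z. C x y * det C[Z - {x, y}]\<close>.
  From this row expansion alone, induction on \<open>|B| + |Z|\<close> yields
  \<open>\<Sum>s\<in>B \<Delta> Z. det C[B \<Delta> {s}] * det C[Z \<Delta> {s}] = (|B| + |Z|) * det C[B] * det C[Z]\<close>.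
  For feasible \<open>Z\<close> the left side vanishes, so \<open>|Z| \<equiv> |B|\<close> mod 2 and \<open>D(C)\<close>, hence \<open>D\<close>, is even.
\<close>

(* The default simp rules turn + and * on bit into xor and and, which defeats ring reasoning. *)
declare mult_bit_eq_and [simp del] add_bit_eq_xor [simp del]

lemma bit_mult_self [simp]: "(c :: bit) * c = c"
  by (cases c) simp_all

lemma bit_add_self [simp]: "(c :: bit) + c = 0"
  by (cases c) simp_all

lemma bit_of_nat_card_remove:
  assumes "finite B" "x \<in> B"
  shows "(of_nat (card B + n) :: bit) = 1 + of_nat (card (B - {x}) + n)"
proof -
  have "card B + n = Suc (card (B - {x}) + n)"
    using card_Suc_Diff1[OF assms] by linarith
  then show ?thesis
    by (simp only: of_nat_Suc)
qed

section \<open>Principal minors of symmetric matrices over GF(2)\<close>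

definition involutions :: "'a set \<Rightarrow> ('a \<Rightarrow> 'a) set" where
  "involutions Z = {p. (\<forall>i. p (p i) = i) \<and> (\<forall>i. i \<notin> Z \<longrightarrow> p i = i)}"

lemma involutions_eq_self_inverse_permutations:
  "involutions Z = {p. p permutes Z \<and> inv p = p}"
proof (intro set_eqI iffI)
  fix p assume "p \<in> involutions Z"
  then have invol: "\<And>i. p (p i) = i" and outside: "\<And>i. i \<notin> Z \<Longrightarrow> p i = i"
    by (auto simp: involutions_def)
  have "p permutes UNIV"
    using involuntory_imp_bij[OF invol] by (simp add: permutes_univ bij_iff)
  then have "p permutes Z"
    by (rule permutes_superset) (simp add: outside)
  moreover have "inv p = p"
    using invol by (intro inv_unique_comp) (auto simp: fun_eq_iff)
  ultimately show "p \<in> {p. p permutes Z \<and> inv p = p}" by simp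
next
  fix p assume "p \<in> {p. p permutes Z \<and> inv p = p}"
  then have perm: "p permutes Z" and "inv p = p" by auto
  then have "p (p i) = i" for i
    using permutes_inverses(2)[OF perm, of i] by simp
  then show "p \<in> involutions Z"
    using permutes_not_in[OF perm] by (auto simp: involutions_def)
qed

lemma finite_involutions: "finite Z \<Longrightarrow> finite (involutions Z)"
  by (rule finite_subset[OF _ finite_permutations[of Z]])
     (auto simp: involutions_eq_self_inverse_permutations)

lemma pdet_eq_sum_permutes: "pdet C Z = (\<Sum>p | p permutes Z. \<Prod>i\<in>Z. C i (p i))"
  unfolding pdet_def by (rule sum.cong) (auto simp: sign_def)

lemma pdet_eq_sum_involutions:
  assumes "finite Z" and C_sym: "\<And>i j. i \<in> Z \<Longrightarrow> j \<in> Z \<Longrightarrow> C i j = C j i"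
  shows "pdet C Z = (\<Sum>p\<in>involutions Z. \<Prod>i\<in>Z. C i (p i))"
proof -
  let ?w = "\<lambda>p. \<Prod>i\<in>Z. C i (p i)" and ?P = "{p. p permutes Z}"
  have w_inv: "?w (inv p) = ?w p" if p: "p permutes Z" for p
  proof -
    have "?w p = (\<Prod>j\<in>Z. C (p j) (inv p (p j)))"
      using p C_sym by (intro prod.cong) (auto simp: permutes_inverses permutes_in_image)
    also have "\<dots> = ?w (inv p)"
      using prod.reindex_bij_betw[OF permutes_imp_bij[OF p], of "\<lambda>i. C i (inv p i)"] by simp
    finally show ?thesis by simp
  qed
  have sub: "involutions Z \<subseteq> ?P"
    by (auto simp: involutions_eq_self_inverse_permutations)
  have "sum ?w (?P - involutions Z) = 0"
  proof (rule sum_involution_eq_0[where h = inv])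
    fix p assume p: "p \<in> ?P - involutions Z"
    then have perm: "p permutes Z" and "inv p \<noteq> p"
      by (auto simp: involutions_eq_self_inverse_permutations)
    then show "inv p \<in> ?P - involutions Z" "inv (inv p) = p" "inv p \<noteq> p"
      by (auto simp: involutions_eq_self_inverse_permutations permutes_inv permutes_inv_inv)
    show "?w (inv p) + ?w p = 0"
      by (simp add: w_inv[OF perm])
  qed
  then show ?thesis
    using sum.subset_diff[OF sub finite_permutations[OF assms(1)], of ?w]
    by (simp add: pdet_eq_sum_permutes)
qed

lemma bij_betw_involutions_partner:
  assumes "x \<in> Z" "y \<in> Z"
  shows "bij_betw (\<lambda>q. q(x := y, y := x)) (involutions (Z - {x, y})) {p \<in> involutions Z. p x = y}"
proof (rule bij_betw_byWitness[where f' = "\<lambda>p. p(x := x, y := y)"])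
  show "\<forall>q\<in>involutions (Z - {x, y}). (q(x := y, y := x))(x := x, y := y) = q"
    by (auto simp: involutions_def fun_eq_iff)
  show "\<forall>p\<in>{p \<in> involutions Z. p x = y}. (p(x := x, y := y))(x := y, y := x) = p"
    by (auto simp: involutions_def fun_eq_iff)
  show "(\<lambda>q. q(x := y, y := x)) ` involutions (Z - {x, y}) \<subseteq> {p \<in> involutions Z. p x = y}"
  proof (rule image_subsetI)
    fix q assume "q \<in> involutions (Z - {x, y})"
    then have invol: "\<And>i. q (q i) = i" and outside: "\<And>i. i \<notin> Z - {x, y} \<Longrightarrow> q i = i"
      by (auto simp: involutions_def)
    then have "q i \<noteq> x \<and> q i \<noteq> y" if "i \<noteq> x" "i \<noteq> y" for i
      using that by (metis DiffD2 insertCI)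
    then show "q(x := y, y := x) \<in> {p \<in> involutions Z. p x = y}"
      using assms invol outside by (auto simp: involutions_def)
  qed
  show "(\<lambda>p. p(x := x, y := y)) ` {p \<in> involutions Z. p x = y} \<subseteq> involutions (Z - {x, y})"
  proof (rule image_subsetI)
    fix p assume "p \<in> {p \<in> involutions Z. p x = y}"
    then have invol: "\<And>i. p (p i) = i" and outside: "\<And>i. i \<notin> Z \<Longrightarrow> p i = i"
      and "p y = x"
      by (auto simp: involutions_def)
    then have "p i \<noteq> x \<and> p i \<noteq> y" if "i \<noteq> x" "i \<noteq> y" for i
      using that by metis
    then show "p(x := x, y := y) \<in> involutions (Z - {x, y})"
      using invol outside by (auto simp: involutions_def)
  qed
qed

lemma prod_involution_partner:
  fixes C :: "'a \<Rightarrow> 'a \<Rightarrow> bit"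
  assumes "finite Z" "x \<in> Z" "y \<in> Z" "C y x = C x y"
  shows "(\<Prod>i\<in>Z. C i ((q(x := y, y := x)) i)) = C x y * (\<Prod>i\<in>Z - {x, y}. C i (q i))"
proof -
  have rest: "(\<Prod>i\<in>Z - {x, y}. C i ((q(x := y, y := x)) i)) = (\<Prod>i\<in>Z - {x, y}. C i (q i))"
    by (rule prod.cong) auto
  show ?thesis
  proof (cases "y = x")
    case True
    then show ?thesis
      using assms rest by (simp add: prod.remove)
  next
    case False
    have "(\<Prod>i\<in>Z. C i ((q(x := y, y := x)) i))
        = C x y * (C y x * (\<Prod>i\<in>Z - {x} - {y}. C i ((q(x := y, y := x)) i)))"
      using assms False by (simp add: prod.remove[of Z x] prod.remove[of "Z - {x}" y])
    then show ?thesis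
      using assms rest by (simp add: Diff_insert2[symmetric] mult.assoc[symmetric])
  qed
qed

lemma pdet_expand:
  assumes "finite Z" and C_sym: "\<And>i j. i \<in> Z \<Longrightarrow> j \<in> Z \<Longrightarrow> C i j = C j i" and "x \<in> Z"
  shows "pdet C Z = (\<Sum>y\<in>Z. C x y * pdet C (Z - {x, y}))"
proof -
  have "pdet C Z = (\<Sum>y\<in>Z. \<Sum>p | p \<in> involutions Z \<and> p x = y. \<Prod>i\<in>Z. C i (p i))"
  proof -
    have "pdet C Z = (\<Sum>p\<in>involutions Z. \<Prod>i\<in>Z. C i (p i))"
      by (rule pdet_eq_sum_involutions[OF assms(1) C_sym])
    moreover have "(\<lambda>p. p x) ` involutions Z \<subseteq> Z"
      using \<open>x \<in> Z\<close> by (auto simp: involutions_eq_self_inverse_permutations permutes_in_image)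
    ultimately show ?thesis
      using sum.group[OF finite_involutions[OF assms(1)] assms(1), of "\<lambda>p. p x" "\<lambda>p. \<Prod>i\<in>Z. C i (p i)"]
      by simp
  qed
  also have "\<dots> = (\<Sum>y\<in>Z. C x y * pdet C (Z - {x, y}))"
  proof (rule sum.cong[OF refl])
    fix y assume y: "y \<in> Z"
    have "(\<Sum>p | p \<in> involutions Z \<and> p x = y. \<Prod>i\<in>Z. C i (p i))
        = (\<Sum>q\<in>involutions (Z - {x, y}). \<Prod>i\<in>Z. C i ((q(x := y, y := x)) i))"
      using sum.reindex_bij_betw[OF bij_betw_involutions_partner[OF \<open>x \<in> Z\<close> y],
          of "\<lambda>p. \<Prod>i\<in>Z. C i (p i)"]
      by simp
    also have "\<dots> = (\<Sum>q\<in>involutions (Z - {x, y}). C x y * (\<Prod>i\<in>Z - {x, y}. C i (q i)))"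
      using assms y by (intro sum.cong prod_involution_partner) auto
    also have "\<dots> = C x y * pdet C (Z - {x, y})"
      using assms pdet_eq_sum_involutions[of "Z - {x, y}" C] by (simp add: sum_distrib_left)
    finally show "(\<Sum>p | p \<in> involutions Z \<and> p x = y. \<Prod>i\<in>Z. C i (p i)) = C x y * pdet C (Z - {x, y})" .
  qed
  finally show ?thesis .
qed

section \<open>The exchange identity\<close>

definition exchange_sum :: "('a set \<Rightarrow> bit) \<Rightarrow> 'a set \<Rightarrow> 'a set \<Rightarrow> bit" where
  "exchange_sum h B Y = (\<Sum>s\<in>symd B Y. h (symd B {s}) * h (symd Y {s}))"

lemma exchange_sum_commute: "exchange_sum h B Y = exchange_sum h Y B"
proof -
  have "symd B Y = symd Y B" by (auto simp: symd_def)
  then show ?thesis unfolding exchange_sum_def by (simp add: mult.commute)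
qed

(* h abstracts Z \<mapsto> pdet C Z: the identity only needs the row expansion. *)
locale gf2_row_expansion =
  fixes E :: "'a set" and C :: "'a \<Rightarrow> 'a \<Rightarrow> bit" and h :: "'a set \<Rightarrow> bit"
  assumes finite_E: "finite E"
    and expand: "\<And>Z x. Z \<subseteq> E \<Longrightarrow> x \<in> Z \<Longrightarrow> h Z = (\<Sum>y\<in>Z. C x y * h (Z - {x, y}))"
begin

definition minor :: "'a \<Rightarrow> 'a set \<Rightarrow> 'a \<Rightarrow> bit" where
  "minor x Z y = (if y \<in> Z then h (Z - {x, y}) else 0)"

lemma expand_minor:
  assumes "Z \<subseteq> E" "x \<in> Z"
  shows "h Z = (\<Sum>y\<in>E. C x y * minor x Z y)"
proof -
  have "(\<Sum>y\<in>E. C x y * minor x Z y) = (\<Sum>y\<in>Z. C x y * minor x Z y)"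
    using finite_E assms(1) by (intro sum.mono_neutral_right) (auto simp: minor_def)
  also have "\<dots> = h Z"
    using expand[OF assms] by (simp add: minor_def)
  finally show ?thesis ..
qed

(* The coefficient of C x y after expanding every term of exchange_sum h B Y along row x. *)
definition exchange_coeff :: "'a \<Rightarrow> 'a set \<Rightarrow> 'a set \<Rightarrow> 'a \<Rightarrow> bit" where
  "exchange_coeff x B Y y = h (B - {x}) * minor x (insert x Y) y
     + (\<Sum>s\<in>symd B Y - {x}. minor x (symd B {s}) y * h (symd Y {s}))"

lemma exchange_sum_expand:
  assumes "B \<subseteq> E" "Y \<subseteq> E" "x \<in> B" "x \<notin> Y"
  shows "exchange_sum h B Y = (\<Sum>y\<in>E. C x y * exchange_coeff x B Y y)"
proof -
  let ?S = "symd B Y"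
  have S: "?S \<subseteq> E" "x \<in> ?S"
    using assms unfolding symd_def by auto
  then have "finite ?S"
    using finite_E finite_subset by auto
  have "exchange_sum h B Y = h (B - {x}) * h (insert x Y) + (\<Sum>s\<in>?S - {x}. h (symd B {s}) * h (symd Y {s}))"
  proof -
    have "symd B {x} = B - {x}" "symd Y {x} = insert x Y"
      using assms unfolding symd_def by auto
    then show ?thesis
      unfolding exchange_sum_def using S \<open>finite ?S\<close> by (simp add: sum.remove)
  qed
  also have "h (insert x Y) = (\<Sum>y\<in>E. C x y * minor x (insert x Y) y)"
    using assms by (intro expand_minor) auto
  also have "(\<Sum>s\<in>?S - {x}. h (symd B {s}) * h (symd Y {s}))
      = (\<Sum>s\<in>?S - {x}. \<Sum>y\<in>E. C x y * (minor x (symd B {s}) y * h (symd Y {s})))"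
  proof (rule sum.cong[OF refl])
    fix s assume "s \<in> ?S - {x}"
    then have "h (symd B {s}) = (\<Sum>y\<in>E. C x y * minor x (symd B {s}) y)"
      using assms S by (intro expand_minor) (auto simp: symd_def)
    then show "h (symd B {s}) * h (symd Y {s}) = (\<Sum>y\<in>E. C x y * (minor x (symd B {s}) y * h (symd Y {s})))"
      by (simp add: sum_distrib_right mult.assoc)
  qed
  also have "\<dots> = (\<Sum>y\<in>E. C x y * (\<Sum>s\<in>?S - {x}. minor x (symd B {s}) y * h (symd Y {s})))"
    by (subst sum.swap) (simp add: sum_distrib_left)
  finally show ?thesis
    by (simp add: exchange_coeff_def sum_distrib_left distrib_left sum.distrib mult.left_commute)
qed

lemma exchange_coeff_self:
  assumes "x \<in> B" "x \<notin> Y"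
  shows "exchange_coeff x B Y x = h (B - {x}) * h Y + exchange_sum h (B - {x}) Y"
proof -
  have "symd (B - {x}) Y = symd B Y - {x}"
    using assms by (auto simp: symd_def)
  moreover have "minor x (symd B {s}) x = h (symd (B - {x}) {s})" if "s \<noteq> x" for s
    using assms that unfolding minor_def symd_def by (auto intro!: arg_cong[where f = h])
  moreover have "minor x (insert x Y) x = h Y"
    using assms by (simp add: minor_def)
  ultimately show ?thesis
    unfolding exchange_coeff_def exchange_sum_def by (auto intro!: sum.cong)
qed

lemma exchange_coeff_mem:
  assumes "finite B" "finite Y" "x \<in> B" "x \<notin> Y" "y \<in> B" "y \<noteq> x"
  shows "exchange_coeff x B Y y = exchange_sum h (B - {x, y}) Y"
proof -
  define B' where "B' = B - {x, y}"
  let ?S = "symd B Y" and ?g = "\<lambda>s. h (symd B' {s}) * h (symd Y {s})"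
  have fin: "finite ?S"
    using assms unfolding symd_def by simp
  have "(\<Sum>s\<in>?S - {x}. minor x (symd B {s}) y * h (symd Y {s}))
      = (\<Sum>s\<in>?S - {x, y}. minor x (symd B {s}) y * h (symd Y {s}))"
    using fin assms by (intro sum.mono_neutral_right) (auto simp: minor_def symd_def)
  also have "\<dots> = sum ?g (?S - {x, y})"
    unfolding B'_def minor_def using assms
    by (intro sum.cong) (auto simp: symd_def intro!: arg_cong[where f = h])
  finally have sum_eq: "(\<Sum>s\<in>?S - {x}. minor x (symd B {s}) y * h (symd Y {s})) = sum ?g (?S - {x, y})" .
  have "exchange_sum h B' Y = h (B - {x}) * minor x (insert x Y) y + sum ?g (?S - {x, y})"
  proof (cases "y \<in> Y")
    case True
    have "symd B' Y = insert y (?S - {x, y})"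
      using assms True unfolding B'_def symd_def by auto
    moreover have "symd B' {y} = B - {x}" "symd Y {y} = Y - {y}"
      using assms True unfolding B'_def symd_def by auto
    moreover have "minor x (insert x Y) y = h (Y - {y})"
      using assms True unfolding minor_def by (auto intro!: arg_cong[where f = h])
    ultimately show ?thesis
      unfolding exchange_sum_def using fin by simp
  next
    case False
    then have "symd B' Y = ?S - {x, y}" "minor x (insert x Y) y = 0"
      using assms unfolding B'_def symd_def minor_def by auto
    then show ?thesis
      unfolding exchange_sum_def by simp
  qed
  then show ?thesis
    unfolding exchange_coeff_def sum_eq B'_def by simp
qed

lemma exchange_coeff_not_mem:
  assumes "finite B" "finite Y" "x \<in> B" "x \<notin> Y" "y \<notin> B"
  shows "exchange_coeff x B Y y = 0"
proof -
  let ?m = "minor x (insert x Y) y"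
  have "(\<Sum>s\<in>symd B Y - {x}. minor x (symd B {s}) y * h (symd Y {s}))
      = (\<Sum>s\<in>symd B Y - {x}. if s = y then h (B - {x}) * ?m else 0)"
    using assms unfolding minor_def symd_def
    by (intro sum.cong) (auto intro!: arg_cong2[where f = "(*)"] arg_cong[where f = h])
  also have "\<dots> = (if y \<in> Y then h (B - {x}) * ?m else 0)"
    using assms by (simp add: symd_def)
  finally show ?thesis
    unfolding exchange_coeff_def using assms by (auto simp: minor_def)
qed

lemma exchange_coeff_eq:
  assumes "B \<subseteq> E" "Y \<subseteq> E" "x \<in> B" "x \<notin> Y"
    and IH: "\<And>B'. B' \<subset> B \<Longrightarrow> exchange_sum h B' Y = of_nat (card B' + card Y) * h B' * h Y"
  shows "exchange_coeff x B Y y = of_nat (card B + card Y) * minor x B y * h Y"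
proof -
  have fin: "finite B" "finite Y"
    using assms finite_E finite_subset by auto
  consider "y = x" | "y \<in> B" "y \<noteq> x" | "y \<notin> B" by blast
  then show ?thesis
  proof cases
    case 1
    have IH': "exchange_sum h (B - {x}) Y = of_nat (card (B - {x}) + card Y) * h (B - {x}) * h Y"
      using assms(3) by (intro IH) auto
    have "minor x B x = h (B - {x})"
      using assms(3) by (simp add: minor_def)
    then show ?thesis
      unfolding 1 exchange_coeff_self[OF assms(3,4)] IH' bit_of_nat_card_remove[OF fin(1) assms(3)]
      by (simp add: algebra_simps)
  next
    case 2
    have IH': "exchange_sum h (B - {x, y}) Y = of_nat (card (B - {x, y}) + card Y) * h (B - {x, y}) * h Y"
      using assms(3) by (intro IH) auto
    have "y \<in> B - {x}" "B - {x} - {y} = B - {x, y}"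
      using 2 by auto
    then have "(of_nat (card B + card Y) :: bit) = 1 + (1 + of_nat (card (B - {x, y}) + card Y))"
      using bit_of_nat_card_remove[OF fin(1) assms(3)] bit_of_nat_card_remove[of "B - {x}" y] fin(1)
      by simp
    moreover have "minor x B y = h (B - {x, y})"
      using 2 by (simp add: minor_def)
    ultimately show ?thesis
      unfolding exchange_coeff_mem[OF fin assms(3,4) 2] IH' by (simp add: add.assoc[symmetric])
  next
    case 3
    then show ?thesis
      using exchange_coeff_not_mem[OF fin assms(3,4) 3] by (simp add: minor_def)
  qed
qed

lemma exchange_sum_step:
  assumes "B \<subseteq> E" "Y \<subseteq> E" "x \<in> B" "x \<notin> Y"
    and "\<And>B'. B' \<subset> B \<Longrightarrow> exchange_sum h B' Y = of_nat (card B' + card Y) * h B' * h Y"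
  shows "exchange_sum h B Y = of_nat (card B + card Y) * h B * h Y"
proof -
  let ?n = "of_nat (card B + card Y) :: bit"
  have "exchange_sum h B Y = (\<Sum>y\<in>E. C x y * (?n * minor x B y * h Y))"
    unfolding exchange_sum_expand[OF assms(1-4)] using exchange_coeff_eq[OF assms] by simp
  also have "\<dots> = ?n * h B * h Y"
    unfolding expand_minor[OF assms(1,3)] by (simp add: sum_distrib_left sum_distrib_right mult_ac)
  finally show ?thesis .
qed

lemma exchange_sum_eq:
  assumes "B \<subseteq> E" "Y \<subseteq> E"
  shows "exchange_sum h B Y = of_nat (card B + card Y) * h B * h Y"
  using assms
proof (induction "card B + card Y" arbitrary: B Y rule: less_induct)
  case less
  have fin: "finite B" "finite Y"
    using less.prems finite_E finite_subset by auto
  consider x where "x \<in> B" "x \<notin> Y" | x where "x \<in> Y" "x \<notin> B" | "B = Y" by blast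
  then show ?case
  proof cases
    case (1 x)
    show ?thesis
    proof (rule exchange_sum_step[OF less.prems 1])
      fix B' assume "B' \<subset> B"
      then show "exchange_sum h B' Y = of_nat (card B' + card Y) * h B' * h Y"
        using less.hyps[of B' Y] less.prems psubset_card_mono[OF fin(1)] by auto
    qed
  next
    case (2 x)
    have "exchange_sum h Y B = of_nat (card Y + card B) * h Y * h B"
    proof (rule exchange_sum_step[OF less.prems(2,1) 2])
      fix Y' assume "Y' \<subset> Y"
      then show "exchange_sum h Y' B = of_nat (card Y' + card B) * h Y' * h B"
        using less.hyps[of Y' B] less.prems psubset_card_mono[OF fin(2)] by auto
    qed
    then show ?thesis
      by (simp add: exchange_sum_commute add.commute mult.commute mult.left_commute)
  next
    case 3
    then show ?thesis
      by (simp add: exchange_sum_def symd_def flip: mult_2)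
  qed
qed

end


lemma symd_symd: "symd A (symd A X) = X"
  by (auto simp: symd_def)

lemma symd_cancel_left: "symd (symd A X) (symd A Y) = symd X Y"
  by (auto simp: symd_def)

lemma image_symd:
  assumes "inj_on f (U \<union> V)"
  shows "f ` symd U V = symd (f ` U) (f ` V)"
  using assms unfolding symd_def by (auto simp: inj_on_def)

lemma even_card_symd_iff:
  assumes "finite U" "finite V"
  shows "even (card (symd U V)) \<longleftrightarrow> even (card U + card V)"
proof -
  have "card U = card (U \<inter> V) + card (U - V)"
    by (rule card_Int_Diff[OF assms(1)])
  moreover have "card V = card (U \<inter> V) + card (V - U)"
    using card_Int_Diff[OF assms(2), of U] by (metis Int_commute)
  moreover have "card (symd U V) = card (U - V) + card (V - U)"
    unfolding symd_def using assms by (intro card_Un_disjoint) auto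
  ultimately show ?thesis by presburger
qed

lemma even_dm_twist_iff: "even_dm (twist F A) \<longleftrightarrow> even_dm F"
  unfolding even_dm_def twist_def by (simp add: symd_cancel_left)

lemma even_dm_image_iff:
  assumes "inj_on f (\<Union>F)"
  shows "even_dm ((\<lambda>X. f ` X) ` F) \<longleftrightarrow> even_dm F"
proof -
  have "card (symd (f ` X) (f ` Y)) = card (symd X Y)" if "X \<in> F" "Y \<in> F" for X Y
  proof -
    have "inj_on f (X \<union> Y)"
      using assms by (rule inj_on_subset) (use that in auto)
    moreover then have "inj_on f (symd X Y)"
      by (rule inj_on_subset) (auto simp: symd_def)
    ultimately show ?thesis
      by (simp add: image_symd[symmetric] card_image)
  qed
  then show ?thesis
    unfolding even_dm_def by auto
qed

lemma image_twist_mem_iff: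
  assumes "inj_on f E" "A \<subseteq> E" "\<forall>Y\<in>F. Y \<subseteq> E" "X \<subseteq> E"
  shows "f ` symd A X \<in> (\<lambda>Z. f ` Z) ` twist F A \<longleftrightarrow> X \<in> F"
proof
  assume "f ` symd A X \<in> (\<lambda>Z. f ` Z) ` twist F A"
  then obtain Y where "Y \<in> F" "f ` symd A X = f ` symd A Y"
    unfolding twist_def by auto
  moreover have "symd A X \<subseteq> E" "symd A Y \<subseteq> E"
    using assms \<open>Y \<in> F\<close> unfolding symd_def by auto
  ultimately have "symd A X = symd A Y"
    using inj_on_image_eq_iff[OF assms(1)] by blast
  then show "X \<in> F"
    using \<open>Y \<in> F\<close> by (metis symd_symd)
qed (auto simp: twist_def)

lemma image_twist_isolated:
  assumes f: "bij_betw f E E" and "A \<subseteq> E" "\<forall>X\<in>F. X \<subseteq> E"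
    and "{} \<in> F" "\<And>e. e \<in> E \<Longrightarrow> {e} \<notin> F"
  shows "f ` A \<in> (\<lambda>X. f ` X) ` twist F A"
    and "\<And>s. s \<in> E \<Longrightarrow> symd (f ` A) {s} \<notin> (\<lambda>X. f ` X) ` twist F A"
proof -
  have inj: "inj_on f E"
    using f by (rule bij_betw_imp_inj_on)
  show "f ` A \<in> (\<lambda>X. f ` X) ` twist F A"
    using image_twist_mem_iff[OF inj assms(2,3), of "{}"] assms(4) by (simp add: symd_def)
  fix s assume "s \<in> E"
  then obtain e where "e \<in> E" "s = f e"
    using f unfolding bij_betw_def by auto
  moreover have "symd (f ` A) {s} = f ` symd A {e}"
    using image_symd[OF inj_on_subset[OF inj], of A "{e}"] assms(2) \<open>e \<in> E\<close> \<open>s = f e\<close> by simp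
  ultimately show "symd (f ` A) {s} \<notin> (\<lambda>X. f ` X) ` twist F A"
    using image_twist_mem_iff[OF inj assms(2,3), of "{e}"] assms(5) by simp
qed

lemma empty_mem_if_all_ribbon_loops:
  assumes "F \<noteq> {}" "\<forall>X\<in>F. X \<subseteq> E" "\<forall>e\<in>E. ribbon_loop E F e"
  shows "{} \<in> F"
proof -
  obtain X where X: "X \<in> F" "\<forall>Y\<in>F. card X \<le> card Y"
    using assms(1) ex_has_least_nat[of "\<lambda>X. X \<in> F" _ card] by blast
  then have "X \<in> F_min F"
    unfolding F_min_def by blast
  then have "X = {}"
    using assms(2,3) X(1) unfolding ribbon_loop_def by blast
  then show ?thesis
    using X(1) by simp
qed

lemma singleton_not_mem_if_orientable_ribbon_loop:
  assumes "orientable_ribbon_loop E F e" "\<forall>X\<in>F. finite X"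
  shows "{e} \<notin> F"
proof
  assume "{e} \<in> F"
  then have empty: "{} \<in> twist F {e}"
    unfolding twist_def by (force simp: symd_def)
  obtain X where X: "X \<in> F_min (twist F {e})" "e \<in> X"
    using assms(1) unfolding orientable_ribbon_loop_def ribbon_loop_def by blast
  then obtain Y where "Y \<in> F" "X = symd {e} Y"
    unfolding F_min_def twist_def by auto
  then have "finite X"
    using assms(2) by (simp add: symd_def)
  moreover have "card X \<le> card ({} :: 'a set)"
    using X(1) empty unfolding F_min_def by blast
  ultimately show False
    using X(2) by simp
qed

lemma DC_card_parity:
  assumes "finite E" "\<And>i j. i \<in> E \<Longrightarrow> j \<in> E \<Longrightarrow> C i j = C j i"
    and "B \<in> DC E C" "\<And>s. s \<in> E \<Longrightarrow> symd B {s} \<notin> DC E C"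
    and "Z \<in> DC E C"
  shows "even (card B + card Z)"
proof -
  interpret gf2_row_expansion E C "pdet C"
  proof
    fix Z x assume Z: "Z \<subseteq> E" "x \<in> Z"
    show "pdet C Z = (\<Sum>y\<in>Z. C x y * pdet C (Z - {x, y}))"
      by (rule pdet_expand) (use assms(1,2) Z finite_subset in blast)+
  qed (rule assms(1))
  have B: "B \<subseteq> E" "pdet C B = 1" and Z: "Z \<subseteq> E" "pdet C Z = 1"
    using assms(3,5) unfolding DC_def by auto
  have "pdet C (symd B {s}) = 0" if "s \<in> E" for s
    using assms(4)[OF that] B(1) that unfolding DC_def symd_def by auto
  then have "exchange_sum (pdet C) B Z = 0"
    using B(1) Z(1) unfolding exchange_sum_def symd_def by (intro sum.neutral) auto
  then have "(of_nat (card B + card Z) :: bit) = 0"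
    using exchange_sum_eq[OF B(1) Z(1)] B(2) Z(2) by simp
  then show ?thesis
    by (metis even_of_nat_iff even_zero)
qed

lemma even_dm_DC:
  assumes "finite E" "\<And>i j. i \<in> E \<Longrightarrow> j \<in> E \<Longrightarrow> C i j = C j i"
    and "B \<in> DC E C" "\<And>s. s \<in> E \<Longrightarrow> symd B {s} \<notin> DC E C"
  shows "even_dm (DC E C)"
  unfolding even_dm_def
proof (intro ballI)
  fix X Y assume "X \<in> DC E C" "Y \<in> DC E C"
  moreover then have "finite X" "finite Y"
    using assms(1) finite_subset unfolding DC_def by auto
  ultimately show "even (card (symd X Y))"
    using DC_card_parity[OF assms] unfolding even_card_symd_iff[OF \<open>finite X\<close> \<open>finite Y\<close>]
    by (metis even_add)
qed

theorem lemma4: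
  fixes E :: "'a set" and F :: "'a set set"
  assumes "delta_matroid E F"
    and "binary_dm E F"
    and "\<forall>e\<in>E. primal_type_u E F e"
  shows "even_dm F"
proof -
  have E: "finite E" "F \<noteq> {}" "\<forall>X\<in>F. X \<subseteq> E"
    using assms(1) unfolding delta_matroid_def by auto
  obtain A C f where A: "A \<subseteq> E" and C: "\<forall>i\<in>E. \<forall>j\<in>E. C i j = C j i"
    and f: "bij_betw f E E" and rep: "(\<lambda>X. f ` X) ` twist F A = DC E C"
    using assms(2) unfolding binary_dm_def by (elim exE conjE) (rule that)
  have "{} \<in> F"
    using E assms(3) unfolding primal_type_u_def orientable_ribbon_loop_def
    by (intro empty_mem_if_all_ribbon_loops) auto
  moreover have "{e} \<notin> F" if "e \<in> E" for e
    using assms(3) E(1,3) that unfolding primal_type_u_def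
    by (intro singleton_not_mem_if_orientable_ribbon_loop) (auto intro: finite_subset)
  ultimately have "even_dm (DC E C)"
    using image_twist_isolated[OF f A E(3)] E(1) C unfolding rep by (intro even_dm_DC) auto
  moreover have "inj_on f (\<Union>(twist F A))"
    by (rule inj_on_subset[OF bij_betw_imp_inj_on[OF f]]) (use A E(3) in \<open>auto simp: twist_def symd_def\<close>)
  ultimately have "even_dm (twist F A)"
    using even_dm_image_iff rep by metis
  then show ?thesis
    by (simp add: even_dm_twist_iff)
qed

end
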